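(* Let $q$ be an odd prime power and $n\ge1$. Let $g(x)\in\mathbb{F}_{q^n}[x]$ be a polynomial such that $g(x)^q=-g(x)$ for every $x\in\mathbb{F}_{q^n}$, let $L(x)=\sum_i a_i x^{q^i}$ with all $a_i\in\mathbb{F}_q$ be a linearized polynomial over $\mathbb{F}_q$, and let $\beta\in\mathbb{F}_{q^n}$ satisfy $\beta^q=-\beta$. Then for every $\delta\in\mathbb{F}_{q^n}$, the polynomial $$f(x)=g(x^q+x+\delta)+\beta\,\mathrm{Tr}(x)+L(x)$$ permutes $\mathbb{F}_{q^n}$ if and only if $L(x)$ permutes $\mathbb{F}_{q^n}$.
   Context: $\mathrm{Tr}$ denotes the trace function from $\mathbb{F}_{q^n}$ to $\mathbb{F}_q$, $\mathrm{Tr}(x)=x+x^q+\cdots+x^{q^{n-1}}$. A polynomial permutes $\mathbb{F}_{q^n}$ if it induces a bijection of $\mathbb{F}_{q^n}$. *)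

theory Defs
  imports "HOL-Computational_Algebra.Polynomial" "HOL-Computational_Algebra.Primes"
begin

definition trace_q :: "nat \<Rightarrow> nat \<Rightarrow> 'a::field \<Rightarrow> 'a" where
  "trace_q q n x = (\<Sum>i<n. x ^ (q ^ i))"

definition linearized :: "nat \<Rightarrow> 'a list \<Rightarrow> 'a::field \<Rightarrow> 'a" where
  "linearized q a x = (\<Sum>i<length a. (a ! i) * x ^ (q ^ i))"

end

theory Submission
  imports Defs "HOL-Number_Theory.Residues"
begin

text \<open>
  Write \<open>\<theta>(x) = x\<^sup>q + x\<close>. Since \<open>g\<close> and \<open>\<beta>\<close> take values in the kernel of \<open>\<theta>\<close>, the trace is
  fixed by Frobenius and \<open>L\<close> commutes with it, one gets \<open>\<theta> \<circ> f = L \<circ> \<theta>\<close>. Moreover \<open>f\<close> is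
  \<open>L\<close>-equivariant along the kernel of \<open>\<theta>\<close>: for \<open>s\<^sup>q = -s\<close> the argument of \<open>g\<close> does not change and
  \<open>Tr(s) = 0\<close> because \<open>q\<close> is odd, so \<open>f(x + s) = f(x) + L(s)\<close>. An elementary counting argument
  then shows that \<open>f\<close> is a bijection exactly when \<open>L\<close> is.
\<close>

text \<open>The library proves this for the class \<open>finite_field\<close>, which a type variable of
  sort \<open>{finite,field}\<close> cannot be shown to belong to.\<close>
lemma finite_field_power_card_eq_self:
  fixes x :: "'a::{finite,field}"
  shows "x ^ card (UNIV :: 'a set) = x"
proof (cases "x = 0")
  case True
  then show ?thesis by (simp add: finite_UNIV_card_ge_0)
next
  case False
  define P where "P = (\<Prod>y\<in>UNIV - {0}. y :: 'a)"
  have "P \<noteq> 0" unfolding P_def by simp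
  have "(\<Prod>y\<in>UNIV - {0}. x * y) = P"
    unfolding P_def
    by (rule prod.reindex_bij_witness[of _ "\<lambda>y. y / x" "\<lambda>y. x * y"]) (use False in auto)
  moreover have "(\<Prod>y\<in>UNIV - {0}. x * y) = x ^ (card (UNIV :: 'a set) - 1) * P"
    unfolding P_def by (simp add: prod.distrib card_Diff_singleton)
  ultimately have "x ^ (card (UNIV :: 'a set) - 1) = 1" using \<open>P \<noteq> 0\<close> by simp
  then have "x * x ^ (card (UNIV :: 'a set) - 1) = x" by simp
  then show ?thesis
    using finite_UNIV_card_ge_0[where ?'a = 'a] by (simp flip: power_Suc)
qed

lemma CHAR_eq_prime_of_card:
  assumes "prime p" and "card (UNIV :: 'a::{finite,field} set) = p ^ m"
  shows "CHAR('a) = p"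
proof -
  have "prime CHAR('a)"
    using prime_CHAR_semidom finite_imp_CHAR_pos[where ?'a = 'a] by simp
  moreover have "CHAR('a) dvd p ^ m"
    using CHAR_dvd_CARD[where ?'a = 'a] assms(2) by simp
  ultimately show ?thesis
    using assms(1) prime_dvd_power primes_dvd_imp_eq by blast
qed

lemma add_power_char_power:
  assumes "prime CHAR('a::comm_semiring_1)" and "q = CHAR('a) ^ k"
  shows "(x + y :: 'a) ^ (q ^ i) = x ^ (q ^ i) + y ^ (q ^ i)"
  using assms by (simp add: freshmans_dream' flip: power_mult)

lemma sum_power_char_power:
  fixes h :: "'b \<Rightarrow> 'a::comm_semiring_1"
  assumes "prime CHAR('a)" and "q = CHAR('a) ^ k"
  shows "sum h A ^ (q ^ i) = (\<Sum>j\<in>A. h j ^ (q ^ i))"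
  using assms by (simp add: freshmans_dream_sum' flip: power_mult)

lemma minus_power_char_power:
  assumes "prime CHAR('a::comm_ring_1)" and "q = CHAR('a) ^ k"
  shows "(- x :: 'a) ^ (q ^ i) = - (x ^ (q ^ i))"
proof -
  have "q ^ i > 0"
    using assms prime_gt_0_nat by simp
  have "(- x) ^ (q ^ i) + x ^ (q ^ i) = (- x + x) ^ (q ^ i)"
    by (rule add_power_char_power[OF assms, symmetric])
  also have "\<dots> = 0"
    using zero_power[OF \<open>q ^ i > 0\<close>] by simp
  finally show ?thesis by (simp add: eq_neg_iff_add_eq_0)
qed

lemma trace_q_add:
  assumes "prime CHAR('a::field)" and "q = CHAR('a) ^ k"
  shows "trace_q q n (x + y :: 'a) = trace_q q n x + trace_q q n y"
  unfolding trace_q_def by (simp add: add_power_char_power[OF assms] sum.distrib)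

lemma trace_q_power_q:
  assumes "prime CHAR('a::field)" and "q = CHAR('a) ^ k" and "x ^ (q ^ n) = (x :: 'a)"
  shows "trace_q q n x ^ q = trace_q q n x"
proof -
  have "trace_q q n x ^ q = (\<Sum>i<n. (x ^ q ^ i) ^ q)"
    unfolding trace_q_def using sum_power_char_power[OF assms(1,2), of _ _ 1] by simp
  also have "\<dots> = (\<Sum>i<n. x ^ (q ^ Suc i))"
    by (simp add: mult.commute flip: power_mult)
  also have "\<dots> = (\<Sum>i<n. x ^ (q ^ i))"
    using sum.lessThan_Suc_shift[of "\<lambda>i. x ^ (q ^ i)" n] assms(3) by simp
  finally show ?thesis unfolding trace_q_def .
qed

text \<open>Here \<open>Tr(s)\<close> is both fixed and negated by Frobenius, and \<open>2\<close> is invertible.\<close>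
lemma trace_q_eq_0_if_power_q_eq_neg:
  assumes "prime CHAR('a::field)" and "q = CHAR('a) ^ k" and "CHAR('a) \<noteq> 2"
    and "s ^ (q ^ n) = (s :: 'a)" and "s ^ q = - s"
  shows "trace_q q n s = 0"
proof -
  have "(s ^ q ^ i) ^ q = - (s ^ q ^ i)" for i
  proof -
    have "(s ^ q ^ i) ^ q = (s ^ q) ^ q ^ i"
      by (simp add: mult.commute flip: power_mult)
    then show ?thesis
      using assms(5) minus_power_char_power[OF assms(1,2)] by simp
  qed
  then have "trace_q q n s ^ q = - trace_q q n s"
    unfolding trace_q_def sum_power_char_power[OF assms(1,2), of _ _ 1, unfolded power_one_right]
    by (simp add: sum_negf)
  then have "trace_q q n s + trace_q q n s = 0"
    using trace_q_power_q[OF assms(1,2,4)] by (simp add: eq_neg_iff_add_eq_0)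
  moreover have "\<not> CHAR('a) dvd 2"
    using primes_dvd_imp_eq[OF assms(1) two_is_prime_nat] assms(3) by blast
  then have "(2 :: 'a) \<noteq> 0"
    using of_nat_eq_0_iff_char_dvd[of 2, where ?'a = 'a] by simp
  ultimately show ?thesis
    by (metis mult_2 mult_eq_0_iff)
qed

lemma linearized_add:
  assumes "prime CHAR('a::field)" and "q = CHAR('a) ^ k"
  shows "linearized q a (x + y :: 'a) = linearized q a x + linearized q a y"
  unfolding linearized_def
  by (simp add: add_power_char_power[OF assms] distrib_left sum.distrib)

lemma linearized_power_q:
  assumes "prime CHAR('a::field)" and "q = CHAR('a) ^ k"
    and "\<forall>i<length a. (a ! i) ^ q = (a ! i :: 'a)"
  shows "linearized q a x ^ q = linearized q a (x ^ q)"
  unfolding linearized_def sum_power_char_power[OF assms(1,2), of _ _ 1, simplified]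
  using assms(3)
  by (intro sum.cong refl) (simp add: power_mult_distrib mult.commute flip: power_mult)

lemma inj_if_inj_linear_part:
  fixes f L \<theta> :: "'a::ab_group_add \<Rightarrow> 'a"
  assumes "additive \<theta>" and "additive L"
    and \<theta>_f: "\<And>x. \<theta> (f x) = L (\<theta> x)"
    and translate: "\<And>x s. \<theta> s = 0 \<Longrightarrow> f (x + s) = f x + L s"
    and "inj L"
  shows "inj f"
proof (rule injI)
  fix x y assume "f x = f y"
  then have "\<theta> x = \<theta> y"
    using \<theta>_f \<open>inj L\<close> by (metis inj_eq)
  then have "\<theta> (x - y) = 0"
    using additive.diff[OF assms(1)] by simp
  then have "f x = f y + L (x - y)"
    using translate[of "x - y" y] by simp
  then have "L (x - y) = L 0"
    using \<open>f x = f y\<close> additive.zero[OF assms(2)] by simp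
  then show "x = y"
    using \<open>inj L\<close> by (simp add: inj_eq)
qed

text \<open>\<open>L\<close> maps the finite set \<open>range \<theta>\<close> onto itself (as \<open>f\<close> is onto), so it is injective
  there; this pushes \<open>L d = 0\<close> down to \<open>\<theta> d = 0\<close>, where injectivity of \<open>f\<close> applies.\<close>
lemma inj_linear_part_if_bij:
  fixes f L \<theta> :: "'a::{finite,ab_group_add} \<Rightarrow> 'a"
  assumes "additive \<theta>" and "additive L"
    and \<theta>_f: "\<And>x. \<theta> (f x) = L (\<theta> x)"
    and \<theta>_L: "\<And>x. \<theta> (L x) = L (\<theta> x)"
    and translate: "\<And>x s. \<theta> s = 0 \<Longrightarrow> f (x + s) = f x + L s"
    and "bij f"
  shows "inj L"
proof -
  have "L ` range \<theta> = range \<theta>"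
  proof
    show "L ` range \<theta> \<subseteq> range \<theta>"
      by (auto simp flip: \<theta>_f)
    show "range \<theta> \<subseteq> L ` range \<theta>"
    proof
      fix y assume "y \<in> range \<theta>"
      then obtain x where "y = \<theta> x" by blast
      moreover obtain z where "x = f z"
        using bij_is_surj[OF \<open>bij f\<close>] by blast
      ultimately show "y \<in> L ` range \<theta>"
        using \<theta>_f by simp
    qed
  qed
  then have inj_on_range: "inj_on L (range \<theta>)"
    by (simp add: eq_card_imp_inj_on)
  show "inj L"
  proof (rule injI)
    fix z w assume "L z = L w"
    define d where "d = z - w"
    have "L d = 0"
      using \<open>L z = L w\<close> additive.diff[OF assms(2)] by (simp add: d_def)
    then have "L (\<theta> d) = L (\<theta> 0)"
      using \<theta>_L additive.zero[OF assms(1)] additive.zero[OF assms(2)] by metis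
    then have "\<theta> d = 0"
      using inj_on_range additive.zero[OF assms(1)] by (metis inj_onD rangeI)
    then have "f d = f 0"
      using translate[of d 0] \<open>L d = 0\<close> by simp
    then show "z = w"
      using bij_is_inj[OF \<open>bij f\<close>] by (simp add: inj_eq d_def)
  qed
qed

lemma bij_iff_bij_linear_part:
  fixes f L \<theta> :: "'a::{finite,ab_group_add} \<Rightarrow> 'a"
  assumes "additive \<theta>" and "additive L"
    and "\<And>x. \<theta> (f x) = L (\<theta> x)"
    and "\<And>x. \<theta> (L x) = L (\<theta> x)"
    and "\<And>x s. \<theta> s = 0 \<Longrightarrow> f (x + s) = f x + L s"
  shows "bij f \<longleftrightarrow> bij L"
proof
  assume "bij L"
  then have "inj f"
    using inj_if_inj_linear_part[of \<theta> L f, OF assms(1,2,3,5)] bij_is_inj by blast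
  then show "bij f"
    by (simp add: bij_def finite_UNIV_inj_surj)
next
  assume "bij f"
  then have "inj L"
    using inj_linear_part_if_bij[of \<theta> L f, OF assms] by blast
  then show "bij L"
    by (simp add: bij_def finite_UNIV_inj_surj)
qed

theorem mainTheorem7:
  fixes q n :: nat
    and g :: "'a::{finite,field} poly"
    and a :: "'a list"
    and \<beta> \<delta> :: 'a
  assumes "\<exists>p k. prime p \<and> k > 0 \<and> q = p ^ k"
    and "odd q"
    and "n \<ge> 1"
    and "card (UNIV :: 'a set) = q ^ n"
    and "\<forall>x. (poly g x) ^ q = - poly g x"
    and "\<forall>i<length a. (a ! i) ^ q = a ! i"
    and "\<beta> ^ q = - \<beta>"
  shows "bij (\<lambda>x. poly g (x ^ q + x + \<delta>) + \<beta> * trace_q q n x + linearized q a x)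
         \<longleftrightarrow> bij (linearized q a)"
proof -
  let ?f = "\<lambda>x. poly g (x ^ q + x + \<delta>) + \<beta> * trace_q q n x + linearized q a x"
  let ?L = "linearized q a"
  obtain p k where "prime p" "k > 0" "q = p ^ k"
    using assms(1) by blast
  then have "CHAR('a) = p"
    using CHAR_eq_prime_of_card[of p "k * n"] assms(4) by (simp add: power_mult)
  then have char: "prime CHAR('a)" "q = CHAR('a) ^ k" "CHAR('a) \<noteq> 2"
    using \<open>prime p\<close> \<open>q = p ^ k\<close> \<open>k > 0\<close> assms(2) by auto
  have fixed: "x ^ (q ^ n) = x" for x :: 'a
    using finite_field_power_card_eq_self assms(4) by metis
  have frob_add: "(x + y) ^ q = x ^ q + y ^ q" for x y :: 'a
    using add_power_char_power[OF char(1,2), of x y 1] by simp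
  define \<theta> where "\<theta> x = x ^ q + x" for x :: 'a
  have "additive \<theta>"
    by (simp add: additive_def \<theta>_def frob_add)
  moreover have "additive ?L"
    by (simp add: additive_def linearized_add[OF char(1,2)])
  moreover have "\<theta> (?f x) = ?L (\<theta> x)" for x
    using assms(5,7)
    by (simp add: \<theta>_def frob_add power_mult_distrib trace_q_power_q[OF char(1,2) fixed]
        linearized_power_q[OF char(1,2) assms(6)] linearized_add[OF char(1,2)])
  moreover have "\<theta> (?L x) = ?L (\<theta> x)" for x
    by (simp add: \<theta>_def linearized_power_q[OF char(1,2) assms(6)] linearized_add[OF char(1,2)])
  moreover have "?f (x + s) = ?f x + ?L s" if "\<theta> s = 0" for x s
  proof -
    have "s ^ q = - s"
      using that by (simp add: \<theta>_def eq_neg_iff_add_eq_0)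
    then show ?thesis
      using trace_q_eq_0_if_power_q_eq_neg[OF char fixed]
      by (simp add: frob_add trace_q_add[OF char(1,2)] linearized_add[OF char(1,2)] algebra_simps)
  qed
  ultimately show ?thesis
    by (rule bij_iff_bij_linear_part)
qed

end
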